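(* Let $(Z, S(1), S(0), Y(1), Y(0), \mathbf{X})$ be random variables with $Z\in\{0,1\}$, $S(z)\in\{0,1\}$, $Y(z)$ real-valued, $\mathbf{X}$ a covariate vector, observed $S=S(Z)$, $Y=Y(Z)$, and assume Randomization: $Z \perp\!\!\!\perp \{S(1),S(0),Y(1),Y(0),\mathbf{X}\}$. Assume Monotonicity, i.e. $S(1)\ge S(0)$ almost surely. Suppose there are constants $\varepsilon_1,\varepsilon_0$ (not depending on $\mathbf{X}$) such that $$\varepsilon_1 = \frac{E\{Y(1)\mid U=s\bar{s},\mathbf{X}\}}{E\{Y(1)\mid U=ss,\mathbf{X}\}},\qquad \varepsilon_0 = \frac{E\{Y(0)\mid U=s\bar{s},\mathbf{X}\}}{E\{Y(0)\mid U=\bar{s}\bar{s},\mathbf{X}\}}.$$ Then $$ACE_{s\bar{s}} = E\{w^{\varepsilon_1}_{1,s\bar{s}}(\mathbf{X})Y\mid Z=1,S=1\} - E\{w^{\varepsilon_0}_{0,s\bar{s}}(\mathbf{X})Y\mid Z=0,S=0\},$$ $$ACE_{\bar{s}\bar{s}} = E(Y\mid Z=1,S=0) - E\{w^{\varepsilon_0}_{0,\bar{s}\bar{s}}(\mathbf{X})Y\mid Z=0,S=0\},$$ $$ACE_{ss} = E\{w^{\varepsilon_1}_{1,ss}(\mathbf{X})Y\mid Z=1,S=1\} - E(Y\mid Z=0,S=1),$$ where $w^{\varepsilon_1}_{1,s\bar{s}}(\mathbf{X}) = \frac{\varepsilon_1 e_{s\bar{s}}(\mathbf{X})}{\varepsilon_1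 e_{s\bar{s}}(\mathbf{X})+e_{ss}(\mathbf{X})}\Big/\frac{\pi_{s\bar{s}}}{\pi_{s\bar{s}}+\pi_{ss}}$, $w^{\varepsilon_0}_{0,s\bar{s}}(\mathbf{X}) = \frac{\varepsilon_0 e_{s\bar{s}}(\mathbf{X})}{\varepsilon_0 e_{s\bar{s}}(\mathbf{X})+e_{\bar{s}\bar{s}}(\mathbf{X})}\Big/\frac{\pi_{s\bar{s}}}{\pi_{s\bar{s}}+\pi_{\bar{s}\bar{s}}}$, $w^{\varepsilon_0}_{0,\bar{s}\bar{s}}(\mathbf{X}) = \frac{e_{\bar{s}\bar{s}}(\mathbf{X})}{\varepsilon_0 e_{s\bar{s}}(\mathbf{X})+e_{\bar{s}\bar{s}}(\mathbf{X})}\Big/\frac{\pi_{\bar{s}\bar{s}}}{\pi_{s\bar{s}}+\pi_{\bar{s}\bar{s}}}$, $w^{\varepsilon_1}_{1,ss}(\mathbf{X}) = \frac{e_{ss}(\mathbf{X})}{\varepsilon_1 e_{s\bar{s}}(\mathbf{X})+e_{ss}(\mathbf{X})}\Big/\frac{\pi_{ss}}{\pi_{s\bar{s}}+\pi_{ss}}$.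
   Context: The principal stratum is $U=(S(1),S(0))$, whose values $(1,1),(1,0),(0,1),(0,0)$ are labelled $ss, s\bar{s}, \bar{s}s, \bar{s}\bar{s}$. Principal scores: $e_u(\mathbf{X}) = \Pr(U=u\mid \mathbf{X})$; proportions $\pi_u=\Pr(U=u)$. Principal causal effects: $ACE_u = E\{Y(1)-Y(0)\mid U=u\}$. All expectations are assumed to exist and all conditioning events and denominators to be positive. *)

theory Defs
  imports "HOL-Probability.Probability"
begin

text \<open>Treatment Z and intermediate potential
outcomes S(1), S(0) are Boolean (True = 1, False = 0); Y(1), Y(0) are real;
the covariate X takes values in an arbitrary measurable space N.\<close>

definition obsS :: "('a \<Rightarrow> bool) \<Rightarrow> ('a \<Rightarrow> bool) \<Rightarrow> ('a \<Rightarrow> bool) \<Rightarrow> 'a \<Rightarrow> bool" where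
  "obsS Z S1 S0 \<omega> = (if Z \<omega> then S1 \<omega> else S0 \<omega>)"

definition obsY :: "('a \<Rightarrow> bool) \<Rightarrow> ('a \<Rightarrow> real) \<Rightarrow> ('a \<Rightarrow> real) \<Rightarrow> 'a \<Rightarrow> real" where
  "obsY Z Y1 Y0 \<omega> = (if Z \<omega> then Y1 \<omega> else Y0 \<omega>)"

definition stratum :: "'a measure \<Rightarrow> ('a \<Rightarrow> bool) \<Rightarrow> ('a \<Rightarrow> bool) \<Rightarrow> bool \<Rightarrow> bool \<Rightarrow> 'a set" where
  "stratum M S1 S0 a b = {\<omega> \<in> space M. S1 \<omega> = a \<and> S0 \<omega> = b}"

definition cexp_ev :: "'a measure \<Rightarrow> ('a \<Rightarrow> real) \<Rightarrow> 'a set \<Rightarrow> real" where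
  "cexp_ev M Y A = (\<integral>\<omega>. Y \<omega> * indicator A \<omega> \<partial>M) / measure M A"

definition sigX :: "'a measure \<Rightarrow> 'x measure \<Rightarrow> ('a \<Rightarrow> 'x) \<Rightarrow> 'a measure" where
  "sigX M N X = vimage_algebra (space M) X N"

definition pscore :: "'a measure \<Rightarrow> 'x measure \<Rightarrow> ('a \<Rightarrow> 'x) \<Rightarrow> 'a set \<Rightarrow> 'a \<Rightarrow> real" where
  "pscore M N X A = real_cond_exp M (sigX M N X) (indicator A)"

definition condE :: "'a measure \<Rightarrow> 'x measure \<Rightarrow> ('a \<Rightarrow> 'x) \<Rightarrow> ('a \<Rightarrow> real) \<Rightarrow> 'a set \<Rightarrow> 'a \<Rightarrow> real" where
  "condE M N X Y A \<omega> =
     real_cond_exp M (sigX M N X) (\<lambda>\<omega>. Y \<omega> * indicator A \<omega>) \<omega> / pscore M N X A \<omega>"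


definition escore :: "'a measure \<Rightarrow> 'x measure \<Rightarrow> ('a \<Rightarrow> 'x) \<Rightarrow> ('a \<Rightarrow> bool) \<Rightarrow> ('a \<Rightarrow> bool) \<Rightarrow> bool \<Rightarrow> bool \<Rightarrow> 'a \<Rightarrow> real" where
  "escore M N X S1 S0 a b = pscore M N X (stratum M S1 S0 a b)"

definition sprop :: "'a measure \<Rightarrow> ('a \<Rightarrow> bool) \<Rightarrow> ('a \<Rightarrow> bool) \<Rightarrow> bool \<Rightarrow> bool \<Rightarrow> real" where
  "sprop M S1 S0 a b = measure M (stratum M S1 S0 a b)"

text \<open>The four weights of the proposition (ss = (T,T), s sbar = (T,F), sbar sbar = (F,F)).\<close>
definition w1_ssbar where
  "w1_ssbar M N X S1 S0 (\<epsilon>1::real) \<omega> =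
     (\<epsilon>1 * escore M N X S1 S0 True False \<omega> /
        (\<epsilon>1 * escore M N X S1 S0 True False \<omega> + escore M N X S1 S0 True True \<omega>))
     / (sprop M S1 S0 True False / (sprop M S1 S0 True False + sprop M S1 S0 True True))"

definition w0_ssbar where
  "w0_ssbar M N X S1 S0 (\<epsilon>0::real) \<omega> =
     (\<epsilon>0 * escore M N X S1 S0 True False \<omega> /
        (\<epsilon>0 * escore M N X S1 S0 True False \<omega> + escore M N X S1 S0 False False \<omega>))
     / (sprop M S1 S0 True False / (sprop M S1 S0 True False + sprop M S1 S0 False False))"

definition w0_sbarsbar where
  "w0_sbarsbar M N X S1 S0 (\<epsilon>0::real) \<omega> =
     (escore M N X S1 S0 False False \<omega> /
        (\<epsilon>0 * escore M N X S1 S0 True False \<omega> + escore M N X S1 S0 False False \<omega>))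
     / (sprop M S1 S0 False False / (sprop M S1 S0 True False + sprop M S1 S0 False False))"

definition w1_ss where
  "w1_ss M N X S1 S0 (\<epsilon>1::real) \<omega> =
     (escore M N X S1 S0 True True \<omega> /
        (\<epsilon>1 * escore M N X S1 S0 True False \<omega> + escore M N X S1 S0 True True \<omega>))
     / (sprop M S1 S0 True True / (sprop M S1 S0 True False + sprop M S1 S0 True True))"

end

theory Submission
  imports Defs
begin

text \<open>Randomization makes the treatment arm independent of the potential outcomes and
covariates, so an observed mean in the arm Z = z with S = s equals the corresponding potential
mean over the event S(z) = s.  Under monotonicity S(1) = 0 is the stratum sbar sbar and
S(0) = 1 the stratum ss, up to null sets; S(1) = 1 is the mixture of ss and s sbar, and S(0) = 0
that of s sbar and sbar sbar.  Given X, the sensitivity parameter fixes the ratio of the two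
stratum means in a mixture, so the conditional mean of Y 1_{A \<union> B} given X splits into the
shares \<epsilon> e_A / (\<epsilon> e_A + e_B) and e_B / (\<epsilon> e_A + e_B); integrating against the principal
score weight therefore recovers the mean over a single stratum.\<close>

lemma cexp_ev_cong:
  assumes "\<And>\<omega>. \<omega> \<in> A \<Longrightarrow> f \<omega> = g \<omega>"
  shows "cexp_ev M f A = cexp_ev M g A"
proof -
  have "(\<lambda>\<omega>. f \<omega> * indicator A \<omega>) = (\<lambda>\<omega>. g \<omega> * indicator A \<omega>)"
    using assms by (auto simp: fun_eq_iff indicator_def)
  then show ?thesis unfolding cexp_ev_def by simp
qed

lemma cexp_ev_cong_AE_set:
  assumes "AE \<omega> in M. \<omega> \<in> A \<longleftrightarrow> \<omega> \<in> B" "A \<in> sets M" "B \<in> sets M"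
    and "f \<in> borel_measurable M"
  shows "cexp_ev M f A = cexp_ev M f B"
proof -
  have "(\<integral>\<omega>. f \<omega> * indicator A \<omega> \<partial>M) = (\<integral>\<omega>. f \<omega> * indicator B \<omega> \<partial>M)"
    using assms(1) by (intro integral_cong_AE) (use assms in \<open>auto simp: indicator_def\<close>)
  then show ?thesis unfolding cexp_ev_def using measure_eq_AE[OF assms(1-3)] by simp
qed

lemma cexp_ev_diff:
  assumes "integrable M (\<lambda>\<omega>. f \<omega> * indicator A \<omega>)" "integrable M (\<lambda>\<omega>. g \<omega> * indicator A \<omega>)"
  shows "cexp_ev M (\<lambda>\<omega>. f \<omega> - g \<omega>) A = cexp_ev M f A - cexp_ev M g A"
proof -
  have "(\<lambda>\<omega>. (f \<omega> - g \<omega>) * indicator A \<omega>) = (\<lambda>\<omega>. f \<omega> * indicator A \<omega> - g \<omega> * indicator A \<omega>)"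
    by (simp add: fun_eq_iff algebra_simps)
  then show ?thesis
    unfolding cexp_ev_def using assms by (simp add: diff_divide_distrib)
qed

lemma odds_weight_split:
  fixes \<epsilon> eA eB mA mB :: real
  assumes \<epsilon>: "\<epsilon> = (mA / eA) / (mB / eB)"
    and nz: "eA \<noteq> 0" "mB / eB \<noteq> 0" "\<epsilon> * eA + eB \<noteq> 0"
  shows "\<epsilon> * eA / (\<epsilon> * eA + eB) * (mA + mB) = mA"
    and "eB / (\<epsilon> * eA + eB) * (mA + mB) = mB"
proof -
  have "mB \<noteq> 0" "eB \<noteq> 0" using nz(2) by auto
  then have "mA + mB = (\<epsilon> * eA + eB) * (mB / eB)" and "\<epsilon> * eA * (mB / eB) = mA"
    using \<epsilon> nz(1) by (simp_all add: field_simps)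
  then show "\<epsilon> * eA / (\<epsilon> * eA + eB) * (mA + mB) = mA"
    and "eB / (\<epsilon> * eA + eB) * (mA + mB) = mB"
    using nz(3) \<open>eB \<noteq> 0\<close> by simp_all
qed

lemma (in prob_space) indep_var_if_indep_set:
  assumes ind: "indep_set A B"
    and rv: "random_variable MX X" "random_variable MY Y"
    and XA: "\<And>C. C \<in> sets MX \<Longrightarrow> X -` C \<inter> space M \<in> A"
    and YB: "\<And>C. C \<in> sets MY \<Longrightarrow> Y -` C \<inter> space M \<in> B"
  shows "indep_var MX X MY Y"
  unfolding indep_var_def indep_vars_def2
proof (intro conjI ballI)
  fix i :: bool
  show "random_variable (case_bool MX MY i) (case_bool X Y i)"
    using rv by (cases i) simp_all
next
  show "indep_sets (\<lambda>i. {case_bool X Y i -` C \<inter> space M |C. C \<in> sets (case_bool MX MY i)}) UNIV"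
    using ind unfolding indep_set_def
  proof (rule indep_sets_mono_sets)
    fix i :: bool
    show "{case_bool X Y i -` C \<inter> space M |C. C \<in> sets (case_bool MX MY i)} \<subseteq> case_bool A B i"
      using XA YB by (cases i) auto
  qed
qed

lemma (in prob_space) indep_var_indicator_integral:
  fixes f :: "'a \<Rightarrow> real"
  assumes iv: "indep_var borel (indicator E :: 'a \<Rightarrow> real) borel f"
    and [measurable]: "E \<in> events"
    and int: "integrable M (\<lambda>\<omega>. f \<omega> * indicator E \<omega>)" and pos: "prob E > 0"
  shows "integrable M f" "(\<integral>\<omega>. f \<omega> * indicator E \<omega> \<partial>M) = prob E * (\<integral>\<omega>. f \<omega> \<partial>M)"
proof -
  have [measurable]: "f \<in> borel_measurable M" using indep_var_rv2[OF iv] by simp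
  have "indep_var borel ((\<lambda>x. ennreal x) \<circ> (indicator E :: 'a \<Rightarrow> real)) borel ((\<lambda>x. ennreal \<bar>x\<bar>) \<circ> f)"
    by (rule indep_var_compose[OF iv]) auto
  moreover have "(\<lambda>_::bool. borel :: ennreal measure) = case_bool borel borel"
    by (rule ext) (simp split: bool.split)
  ultimately have "indep_vars (\<lambda>_. borel)
      (case_bool ((\<lambda>x. ennreal x) \<circ> (indicator E :: 'a \<Rightarrow> real)) ((\<lambda>x. ennreal \<bar>x\<bar>) \<circ> f)) UNIV"
    unfolding indep_var_def by simp
  from indep_vars_nn_integral[OF _ this]
  have "(\<integral>\<^sup>+\<omega>. ennreal (indicator E \<omega>) * ennreal \<bar>f \<omega>\<bar> \<partial>M)
      = (\<integral>\<^sup>+\<omega>. ennreal (indicator E \<omega>) \<partial>M) * (\<integral>\<^sup>+\<omega>. ennreal \<bar>f \<omega>\<bar> \<partial>M)"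
    by (simp add: UNIV_bool mult.commute comp_def)
  moreover have "(\<integral>\<^sup>+\<omega>. ennreal (indicator E \<omega>) * ennreal \<bar>f \<omega>\<bar> \<partial>M)
      = (\<integral>\<^sup>+\<omega>. ennreal (norm (f \<omega> * indicator E \<omega>)) \<partial>M)"
    by (intro nn_integral_cong) (auto simp: indicator_def)
  moreover have "(\<integral>\<^sup>+\<omega>. ennreal (indicator E \<omega>) \<partial>M) = ennreal (prob E)"
    by (simp add: ennreal_indicator emeasure_eq_measure)
  ultimately have "ennreal (prob E) * (\<integral>\<^sup>+\<omega>. ennreal \<bar>f \<omega>\<bar> \<partial>M) < \<infinity>"
    using int by (simp add: integrable_iff_bounded)
  then have "(\<integral>\<^sup>+\<omega>. ennreal \<bar>f \<omega>\<bar> \<partial>M) < \<infinity>"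
    using pos by (auto simp: ennreal_mult_less_top)
  then show intf: "integrable M f" by (intro integrableI_bounded) auto
  have "(\<integral>\<omega>. indicator E \<omega> * f \<omega> \<partial>M) = (\<integral>\<omega>. indicator E \<omega> \<partial>M) * (\<integral>\<omega>. f \<omega> \<partial>M)"
    by (rule indep_var_lebesgue_integral[OF iv _ intf]) (simp add: integrable_indicator_iff emeasure_eq_measure)
  then show "(\<integral>\<omega>. f \<omega> * indicator E \<omega> \<partial>M) = prob E * (\<integral>\<omega>. f \<omega> \<partial>M)"
    by (simp add: mult.commute)
qed

context sigma_finite_subalgebra
begin

lemma integral_mult_cond_exp_weight:
  fixes h f g :: "'a \<Rightarrow> real"
  assumes [measurable]: "h \<in> borel_measurable F" "f \<in> borel_measurable M"
    and "integrable M (\<lambda>\<omega>. h \<omega> * f \<omega>)" "integrable M g"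
    and "AE \<omega> in M. h \<omega> * real_cond_exp M F f \<omega> = c * real_cond_exp M F g \<omega>"
  shows "(\<integral>\<omega>. h \<omega> * f \<omega> \<partial>M) = c * (\<integral>\<omega>. g \<omega> \<partial>M)"
proof -
  have "(\<integral>\<omega>. h \<omega> * f \<omega> \<partial>M) = (\<integral>\<omega>. h \<omega> * real_cond_exp M F f \<omega> \<partial>M)"
    using real_cond_exp_intg(2)[OF assms(3)] by simp
  also have "\<dots> = (\<integral>\<omega>. c * real_cond_exp M F g \<omega> \<partial>M)"
    using assms(5) by (intro integral_cong_AE) (auto intro: measurable_from_subalg[OF subalg])
  also have "\<dots> = c * (\<integral>\<omega>. g \<omega> \<partial>M)"
    using real_cond_exp_int(2)[OF assms(4)] by simp
  finally show ?thesis .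
qed

lemma cexp_ev_reweight:
  fixes h Y :: "'a \<Rightarrow> real"
  assumes [measurable]: "h \<in> borel_measurable F" "C \<in> sets M" "D \<in> sets M"
    and intY: "integrable M Y" and pos: "measure M C > 0" "measure M D > 0"
    and int: "integrable M (\<lambda>\<omega>. h \<omega> / (measure M C / measure M D) * Y \<omega> * indicator D \<omega>)"
    and weight: "AE \<omega> in M. h \<omega> * real_cond_exp M F (\<lambda>\<omega>. Y \<omega> * indicator D \<omega>) \<omega>
                             = real_cond_exp M F (\<lambda>\<omega>. Y \<omega> * indicator C \<omega>) \<omega>"
  shows "cexp_ev M (\<lambda>\<omega>. h \<omega> / (measure M C / measure M D) * Y \<omega>) D = cexp_ev M Y C"
proof -
  define k where "k = measure M C / measure M D"
  have [measurable]: "Y \<in> borel_measurable M" using intY by simp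
  have "(\<integral>\<omega>. h \<omega> / k * (Y \<omega> * indicator D \<omega>) \<partial>M) = (1 / k) * (\<integral>\<omega>. Y \<omega> * indicator C \<omega> \<partial>M)"
  proof (rule integral_mult_cond_exp_weight)
    show "integrable M (\<lambda>\<omega>. h \<omega> / k * (Y \<omega> * indicator D \<omega>))"
      using int unfolding k_def by (simp add: mult.assoc)
    show "integrable M (\<lambda>\<omega>. Y \<omega> * indicator C \<omega>)"
      using integrable_mult_indicator[OF _ intY] by (simp add: mult.commute)
    show "AE \<omega> in M. h \<omega> / k * real_cond_exp M F (\<lambda>\<omega>. Y \<omega> * indicator D \<omega>) \<omega>
                      = 1 / k * real_cond_exp M F (\<lambda>\<omega>. Y \<omega> * indicator C \<omega>) \<omega>"
      using weight by eventually_elim simp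
  qed measurable
  then show ?thesis
    unfolding cexp_ev_def k_def using pos by (simp add: mult.assoc)
qed

end

context finite_measure_subalgebra
begin

lemma cexp_ev_principal_score_weighted:
  fixes Y :: "'a \<Rightarrow> real" and A B :: "'a set" and \<epsilon> :: real
  defines "eA \<equiv> real_cond_exp M F (indicator A)" and "eB \<equiv> real_cond_exp M F (indicator B)"
    and "mA \<equiv> real_cond_exp M F (\<lambda>\<omega>. Y \<omega> * indicator A \<omega>)"
    and "mB \<equiv> real_cond_exp M F (\<lambda>\<omega>. Y \<omega> * indicator B \<omega>)"
  assumes intY: "integrable M Y" and [measurable]: "A \<in> sets M" "B \<in> sets M"
    and disj: "A \<inter> B = {}" and pos: "measure M A > 0" "measure M B > 0"
    and ratio: "AE \<omega> in M. \<epsilon> = (mA \<omega> / eA \<omega>) / (mB \<omega> / eB \<omega>)"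
    and nz: "AE \<omega> in M. eA \<omega> \<noteq> 0" "AE \<omega> in M. mB \<omega> / eB \<omega> \<noteq> 0"
      "AE \<omega> in M. \<epsilon> * eA \<omega> + eB \<omega> \<noteq> 0"
    and intA: "integrable M (\<lambda>\<omega>. \<epsilon> * eA \<omega> / (\<epsilon> * eA \<omega> + eB \<omega>)
                 / (measure M A / (measure M A + measure M B)) * Y \<omega> * indicator (A \<union> B) \<omega>)"
    and intB: "integrable M (\<lambda>\<omega>. eB \<omega> / (\<epsilon> * eA \<omega> + eB \<omega>)
                 / (measure M B / (measure M A + measure M B)) * Y \<omega> * indicator (A \<union> B) \<omega>)"
  shows "cexp_ev M (\<lambda>\<omega>. \<epsilon> * eA \<omega> / (\<epsilon> * eA \<omega> + eB \<omega>)
           / (measure M A / (measure M A + measure M B)) * Y \<omega>) (A \<union> B) = cexp_ev M Y A"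
    and "cexp_ev M (\<lambda>\<omega>. eB \<omega> / (\<epsilon> * eA \<omega> + eB \<omega>)
           / (measure M B / (measure M A + measure M B)) * Y \<omega>) (A \<union> B) = cexp_ev M Y B"
proof -
  have [measurable]: "eA \<in> borel_measurable F" "eB \<in> borel_measurable F"
    unfolding eA_def eB_def by simp_all
  have union: "measure M (A \<union> B) = measure M A + measure M B"
    using disj by (simp add: finite_measure_Union)
  have "(\<lambda>\<omega>. Y \<omega> * indicator (A \<union> B) \<omega>) = (\<lambda>\<omega>. Y \<omega> * indicator A \<omega> + Y \<omega> * indicator B \<omega>)"
    using disj by (auto simp: fun_eq_iff indicator_def)
  then have add: "AE \<omega> in M. real_cond_exp M F (\<lambda>\<omega>. Y \<omega> * indicator (A \<union> B) \<omega>) \<omega> = mA \<omega> + mB \<omega>"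
    unfolding mA_def mB_def using intY
    by (simp add: real_cond_exp_add integrable_real_mult_indicator)
  have split: "AE \<omega> in M. \<epsilon> * eA \<omega> / (\<epsilon> * eA \<omega> + eB \<omega>) * (mA \<omega> + mB \<omega>) = mA \<omega>
                        \<and> eB \<omega> / (\<epsilon> * eA \<omega> + eB \<omega>) * (mA \<omega> + mB \<omega>) = mB \<omega>"
    using ratio nz by eventually_elim (use odds_weight_split in blast)
  have pos_union: "measure M (A \<union> B) > 0" using pos union by simp
  have "AE \<omega> in M. \<epsilon> * eA \<omega> / (\<epsilon> * eA \<omega> + eB \<omega>)
           * real_cond_exp M F (\<lambda>\<omega>. Y \<omega> * indicator (A \<union> B) \<omega>) \<omega> = mA \<omega>"
    using add split by eventually_elim simp
  from cexp_ev_reweight[OF _ _ _ intY pos(1) pos_union _ this[unfolded mA_def]] intA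
  show "cexp_ev M (\<lambda>\<omega>. \<epsilon> * eA \<omega> / (\<epsilon> * eA \<omega> + eB \<omega>)
          / (measure M A / (measure M A + measure M B)) * Y \<omega>) (A \<union> B) = cexp_ev M Y A"
    unfolding union by simp
  have "AE \<omega> in M. eB \<omega> / (\<epsilon> * eA \<omega> + eB \<omega>)
           * real_cond_exp M F (\<lambda>\<omega>. Y \<omega> * indicator (A \<union> B) \<omega>) \<omega> = mB \<omega>"
    using add split by eventually_elim simp
  from cexp_ev_reweight[OF _ _ _ intY pos(2) pos_union _ this[unfolded mB_def]] intB
  show "cexp_ev M (\<lambda>\<omega>. eB \<omega> / (\<epsilon> * eA \<omega> + eB \<omega>)
          / (measure M B / (measure M A + measure M B)) * Y \<omega>) (A \<union> B) = cexp_ev M Y B"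
    unfolding union by simp
qed

end

lemma subalgebra_vimage_algebra:
  assumes "f \<in> measurable M N"
  shows "subalgebra M (vimage_algebra (space M) f N)"
proof -
  have "f \<in> space M \<rightarrow> space N" using measurable_space[OF assms] by auto
  then show ?thesis
    unfolding subalgebra_def using measurable_sets[OF assms] by (auto simp: sets_vimage_algebra2)
qed

locale randomized_experiment = prob_space M
  for M :: "'a measure" and N :: "'x measure"
    and Z S1 S0 :: "'a \<Rightarrow> bool" and Y1 Y0 :: "'a \<Rightarrow> real" and X :: "'a \<Rightarrow> 'x" +
  assumes measurable_Z[measurable]: "Z \<in> M \<rightarrow>\<^sub>M count_space UNIV"
    and measurable_S1[measurable]: "S1 \<in> M \<rightarrow>\<^sub>M count_space UNIV"
    and measurable_S0[measurable]: "S0 \<in> M \<rightarrow>\<^sub>M count_space UNIV"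
    and measurable_Y1[measurable]: "Y1 \<in> borel_measurable M"
    and measurable_Y0[measurable]: "Y0 \<in> borel_measurable M"
    and measurable_X[measurable]: "X \<in> M \<rightarrow>\<^sub>M N"
    and randomization: "indep_set
           {Z -` A \<inter> space M | A. A \<in> sets (count_space UNIV)}
           {(\<lambda>\<omega>. (S1 \<omega>, S0 \<omega>, Y1 \<omega>, Y0 \<omega>, X \<omega>)) -` B \<inter> space M | B.
              B \<in> sets (count_space UNIV \<Otimes>\<^sub>M count_space UNIV \<Otimes>\<^sub>M borel \<Otimes>\<^sub>M borel \<Otimes>\<^sub>M N)}"
begin

definition potential_algebra :: "'a measure" where
  "potential_algebra = vimage_algebra (space M) (\<lambda>\<omega>. (S1 \<omega>, S0 \<omega>, Y1 \<omega>, Y0 \<omega>, X \<omega>))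
     (count_space UNIV \<Otimes>\<^sub>M count_space UNIV \<Otimes>\<^sub>M borel \<Otimes>\<^sub>M borel \<Otimes>\<^sub>M N)"

lemma space_potential_algebra [simp]: "space potential_algebra = space M"
  by (simp add: potential_algebra_def)

lemma sets_potential_algebra:
  "sets potential_algebra = {(\<lambda>\<omega>. (S1 \<omega>, S0 \<omega>, Y1 \<omega>, Y0 \<omega>, X \<omega>)) -` B \<inter> space M | B.
     B \<in> sets (count_space UNIV \<Otimes>\<^sub>M count_space UNIV \<Otimes>\<^sub>M borel \<Otimes>\<^sub>M borel \<Otimes>\<^sub>M N)}"
  unfolding potential_algebra_def
  by (rule sets_vimage_algebra2) (auto simp: space_pair_measure dest: measurable_space[OF measurable_X])

lemma subalgebra_potential_algebra: "subalgebra M potential_algebra"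
  unfolding potential_algebra_def by (rule subalgebra_vimage_algebra) measurable

lemma measurable_potential_algebra [measurable]:
  "S1 \<in> potential_algebra \<rightarrow>\<^sub>M count_space UNIV" "S0 \<in> potential_algebra \<rightarrow>\<^sub>M count_space UNIV"
  "Y1 \<in> borel_measurable potential_algebra" "Y0 \<in> borel_measurable potential_algebra"
  "X \<in> potential_algebra \<rightarrow>\<^sub>M N"
proof -
  have V: "(\<lambda>\<omega>. (S1 \<omega>, S0 \<omega>, Y1 \<omega>, Y0 \<omega>, X \<omega>)) \<in> potential_algebra \<rightarrow>\<^sub>M
      count_space UNIV \<Otimes>\<^sub>M count_space UNIV \<Otimes>\<^sub>M borel \<Otimes>\<^sub>M borel \<Otimes>\<^sub>M N"
    unfolding potential_algebra_def
    by (rule measurable_vimage_algebra1) (auto simp: space_pair_measure dest: measurable_space[OF measurable_X])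
  note fst = measurable_compose[OF _ measurable_fst] and snd = measurable_compose[OF _ measurable_snd]
  show "S1 \<in> potential_algebra \<rightarrow>\<^sub>M count_space UNIV"
    using fst[OF V] by simp
  show "S0 \<in> potential_algebra \<rightarrow>\<^sub>M count_space UNIV"
    using fst[OF snd[OF V]] by simp
  show "Y1 \<in> borel_measurable potential_algebra"
    using fst[OF snd[OF snd[OF V]]] by simp
  show "Y0 \<in> borel_measurable potential_algebra"
    using fst[OF snd[OF snd[OF snd[OF V]]]] by simp
  show "X \<in> potential_algebra \<rightarrow>\<^sub>M N"
    using snd[OF snd[OF snd[OF snd[OF V]]]] by simp
qed

lemma subalgebra_covariate_algebra: "subalgebra potential_algebra (sigX M N X)"
  using subalgebra_vimage_algebra[OF measurable_potential_algebra(5)] by (simp add: sigX_def)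

sublocale covariates: finite_measure_subalgebra M "sigX M N X"
  by unfold_locales (simp add: sigX_def subalgebra_vimage_algebra)

lemma escore_measurable_potential [measurable]:
  "escore M N X S1 S0 a b \<in> borel_measurable potential_algebra"
  unfolding escore_def pscore_def
  by (rule measurable_from_subalg[OF subalgebra_covariate_algebra]) simp

lemma cexp_ev_arm_eq:
  fixes f :: "'a \<Rightarrow> real"
  assumes f: "f \<in> borel_measurable potential_algebra" and T: "T \<in> sets potential_algebra"
    and int: "integrable M (\<lambda>\<omega>. f \<omega> * indicator {\<omega> \<in> T. Z \<omega> = z} \<omega>)"
    and pos: "prob {\<omega> \<in> T. Z \<omega> = z} > 0"
  shows "integrable M (\<lambda>\<omega>. f \<omega> * indicator T \<omega>)"
    and "cexp_ev M f {\<omega> \<in> T. Z \<omega> = z} = cexp_ev M f T"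
proof -
  define E where "E = {\<omega> \<in> space M. Z \<omega> = z}"
  define g where "g \<omega> = f \<omega> * indicator T \<omega>" for \<omega>
  have E_events [measurable]: "E \<in> events" unfolding E_def by measurable
  have T_events [measurable]: "T \<in> events"
    using T subalgebra_potential_algebra by (auto simp: subalgebra_def)
  have g_potential [measurable]: "g \<in> borel_measurable potential_algebra"
    unfolding g_def using f T by measurable
  have ET: "{\<omega> \<in> T. Z \<omega> = z} = E \<inter> T"
    using sets.sets_into_space[OF T_events] by (auto simp: E_def)
  have E_treatment: "indicator E -` C \<inter> space M \<in> {Z -` A \<inter> space M | A. A \<in> sets (count_space UNIV)}"
    for C :: "real set"
  proof -
    have "indicator E -` C \<inter> space M = Z -` {b. (if b = z then 1 else 0) \<in> C} \<inter> space M"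
      by (auto simp: E_def indicator_def)
    moreover have "{b. (if b = z then 1 else 0) \<in> C} \<in> sets (count_space UNIV)" by simp
    ultimately show ?thesis by (intro CollectI exI conjI)
  qed
  have "E \<in> {Z -` A \<inter> space M | A. A \<in> sets (count_space UNIV)}"
    unfolding E_def by (intro CollectI exI[of _ "{z}"]) auto
  moreover have "T \<in> {(\<lambda>\<omega>. (S1 \<omega>, S0 \<omega>, Y1 \<omega>, Y0 \<omega>, X \<omega>)) -` B \<inter> space M | B.
      B \<in> sets (count_space UNIV \<Otimes>\<^sub>M count_space UNIV \<Otimes>\<^sub>M borel \<Otimes>\<^sub>M borel \<Otimes>\<^sub>M N)}"
    using T by (simp add: sets_potential_algebra)
  ultimately have prob_ET: "prob (E \<inter> T) = prob E * prob T"
    by (rule indep_setD[OF randomization])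
  have pos_E: "prob E > 0"
    using pos prob_ET ET measure_nonneg[of M T] by (auto simp: zero_less_mult_iff)
  have iv: "indep_var borel (indicator E) borel g"
  proof (rule indep_var_if_indep_set[OF randomization])
    show "random_variable borel g"
      using measurable_from_subalg[OF subalgebra_potential_algebra g_potential] .
    show "g -` C \<inter> space M \<in> {(\<lambda>\<omega>. (S1 \<omega>, S0 \<omega>, Y1 \<omega>, Y0 \<omega>, X \<omega>)) -` B \<inter> space M | B.
        B \<in> sets (count_space UNIV \<Otimes>\<^sub>M count_space UNIV \<Otimes>\<^sub>M borel \<Otimes>\<^sub>M borel \<Otimes>\<^sub>M N)}"
      if "C \<in> sets borel" for C
      using measurable_sets[OF g_potential that] by (simp add: sets_potential_algebra)
  qed (use E_treatment in simp_all)
  have gE: "(\<lambda>\<omega>. g \<omega> * indicator E \<omega>) = (\<lambda>\<omega>. f \<omega> * indicator {\<omega> \<in> T. Z \<omega> = z} \<omega>)"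
    unfolding ET g_def by (simp add: fun_eq_iff indicator_inter_arith)
  with int have "integrable M (\<lambda>\<omega>. g \<omega> * indicator E \<omega>)" by simp
  note g_integral = indep_var_indicator_integral[OF iv E_events this pos_E]
  show "integrable M (\<lambda>\<omega>. f \<omega> * indicator T \<omega>)"
    using g_integral(1) unfolding g_def .
  have "cexp_ev M f {\<omega> \<in> T. Z \<omega> = z} = (\<integral>\<omega>. g \<omega> * indicator E \<omega> \<partial>M) / prob (E \<inter> T)"
    unfolding cexp_ev_def gE ET ..
  also have "\<dots> = (\<integral>\<omega>. g \<omega> \<partial>M) / prob T"
    unfolding g_integral(2) prob_ET using pos_E by simp
  also have "\<dots> = cexp_ev M f T"
    unfolding cexp_ev_def g_def ..
  finally show "cexp_ev M f {\<omega> \<in> T. Z \<omega> = z} = cexp_ev M f T" .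
qed

lemma cexp_ev_observed_treated:
  fixes h :: "'a \<Rightarrow> real"
  assumes h: "h \<in> borel_measurable potential_algebra"
    and int: "integrable M (\<lambda>\<omega>. h \<omega> * obsY Z Y1 Y0 \<omega>)"
    and pos: "prob {\<omega> \<in> space M. Z \<omega> \<and> obsS Z S1 S0 \<omega> = s} > 0"
  shows "integrable M (\<lambda>\<omega>. h \<omega> * Y1 \<omega> * indicator {\<omega> \<in> space M. S1 \<omega> = s} \<omega>)"
    and "cexp_ev M (\<lambda>\<omega>. h \<omega> * obsY Z Y1 Y0 \<omega>) {\<omega> \<in> space M. Z \<omega> \<and> obsS Z S1 S0 \<omega> = s}
         = cexp_ev M (\<lambda>\<omega>. h \<omega> * Y1 \<omega>) {\<omega> \<in> space M. S1 \<omega> = s}"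
proof -
  let ?T = "{\<omega> \<in> space M. S1 \<omega> = s}"
  have T: "?T \<in> sets potential_algebra"
    using measurable_sets[OF measurable_potential_algebra(1), of "{s}"] by (simp add: vimage_def Int_def conj_commute)
  have arm: "{\<omega> \<in> space M. Z \<omega> \<and> obsS Z S1 S0 \<omega> = s} = {\<omega> \<in> ?T. Z \<omega> = True}"
    by (auto simp: obsS_def)
  have "(\<lambda>\<omega>. h \<omega> * Y1 \<omega> * indicator {\<omega> \<in> ?T. Z \<omega> = True} \<omega>)
      = (\<lambda>\<omega>. h \<omega> * obsY Z Y1 Y0 \<omega> * indicator {\<omega> \<in> ?T. Z \<omega> = True} \<omega>)"
    by (auto simp: fun_eq_iff obsY_def indicator_def)
  with int have int_arm: "integrable M (\<lambda>\<omega>. h \<omega> * Y1 \<omega> * indicator {\<omega> \<in> ?T. Z \<omega> = True} \<omega>)"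
    by (auto intro: integrable_real_mult_indicator)
  have "(\<lambda>\<omega>. h \<omega> * Y1 \<omega>) \<in> borel_measurable potential_algebra"
    using h by measurable
  note arm_integral = cexp_ev_arm_eq[OF this T int_arm pos[unfolded arm]]
  show "integrable M (\<lambda>\<omega>. h \<omega> * Y1 \<omega> * indicator ?T \<omega>)"
    using arm_integral(1) .
  have "cexp_ev M (\<lambda>\<omega>. h \<omega> * obsY Z Y1 Y0 \<omega>) {\<omega> \<in> ?T. Z \<omega> = True}
      = cexp_ev M (\<lambda>\<omega>. h \<omega> * Y1 \<omega>) {\<omega> \<in> ?T. Z \<omega> = True}"
    by (rule cexp_ev_cong) (simp add: obsY_def)
  also have "\<dots> = cexp_ev M (\<lambda>\<omega>. h \<omega> * Y1 \<omega>) ?T"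
    using arm_integral(2) .
  finally show "cexp_ev M (\<lambda>\<omega>. h \<omega> * obsY Z Y1 Y0 \<omega>) {\<omega> \<in> space M. Z \<omega> \<and> obsS Z S1 S0 \<omega> = s}
      = cexp_ev M (\<lambda>\<omega>. h \<omega> * Y1 \<omega>) ?T"
    unfolding arm .
qed

lemma cexp_ev_observed_control:
  fixes h :: "'a \<Rightarrow> real"
  assumes h: "h \<in> borel_measurable potential_algebra"
    and int: "integrable M (\<lambda>\<omega>. h \<omega> * obsY Z Y1 Y0 \<omega>)"
    and pos: "prob {\<omega> \<in> space M. \<not> Z \<omega> \<and> obsS Z S1 S0 \<omega> = s} > 0"
  shows "integrable M (\<lambda>\<omega>. h \<omega> * Y0 \<omega> * indicator {\<omega> \<in> space M. S0 \<omega> = s} \<omega>)"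
    and "cexp_ev M (\<lambda>\<omega>. h \<omega> * obsY Z Y1 Y0 \<omega>) {\<omega> \<in> space M. \<not> Z \<omega> \<and> obsS Z S1 S0 \<omega> = s}
         = cexp_ev M (\<lambda>\<omega>. h \<omega> * Y0 \<omega>) {\<omega> \<in> space M. S0 \<omega> = s}"
proof -
  let ?T = "{\<omega> \<in> space M. S0 \<omega> = s}"
  have T: "?T \<in> sets potential_algebra"
    using measurable_sets[OF measurable_potential_algebra(2), of "{s}"] by (simp add: vimage_def Int_def conj_commute)
  have arm: "{\<omega> \<in> space M. \<not> Z \<omega> \<and> obsS Z S1 S0 \<omega> = s} = {\<omega> \<in> ?T. Z \<omega> = False}"
    by (auto simp: obsS_def)
  have "(\<lambda>\<omega>. h \<omega> * Y0 \<omega> * indicator {\<omega> \<in> ?T. Z \<omega> = False} \<omega>)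
      = (\<lambda>\<omega>. h \<omega> * obsY Z Y1 Y0 \<omega> * indicator {\<omega> \<in> ?T. Z \<omega> = False} \<omega>)"
    by (auto simp: fun_eq_iff obsY_def indicator_def)
  with int have int_arm: "integrable M (\<lambda>\<omega>. h \<omega> * Y0 \<omega> * indicator {\<omega> \<in> ?T. Z \<omega> = False} \<omega>)"
    by (auto intro: integrable_real_mult_indicator)
  have "(\<lambda>\<omega>. h \<omega> * Y0 \<omega>) \<in> borel_measurable potential_algebra"
    using h by measurable
  note arm_integral = cexp_ev_arm_eq[OF this T int_arm pos[unfolded arm]]
  show "integrable M (\<lambda>\<omega>. h \<omega> * Y0 \<omega> * indicator ?T \<omega>)"
    using arm_integral(1) .
  have "cexp_ev M (\<lambda>\<omega>. h \<omega> * obsY Z Y1 Y0 \<omega>) {\<omega> \<in> ?T. Z \<omega> = False}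
      = cexp_ev M (\<lambda>\<omega>. h \<omega> * Y0 \<omega>) {\<omega> \<in> ?T. Z \<omega> = False}"
    by (rule cexp_ev_cong) (simp add: obsY_def)
  also have "\<dots> = cexp_ev M (\<lambda>\<omega>. h \<omega> * Y0 \<omega>) ?T"
    using arm_integral(2) .
  finally show "cexp_ev M (\<lambda>\<omega>. h \<omega> * obsY Z Y1 Y0 \<omega>) {\<omega> \<in> space M. \<not> Z \<omega> \<and> obsS Z S1 S0 \<omega> = s}
      = cexp_ev M (\<lambda>\<omega>. h \<omega> * Y0 \<omega>) ?T"
    unfolding arm .
qed

lemma stratum_events [measurable]: "stratum M S1 S0 a b \<in> events"
  unfolding stratum_def by measurable

lemma strata_disjoint: "(a, b) \<noteq> (c, d) \<Longrightarrow> stratum M S1 S0 a b \<inter> stratum M S1 S0 c d = {}"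
  by (auto simp: stratum_def)

lemma treated_strata: "{\<omega> \<in> space M. S1 \<omega> = True} = stratum M S1 S0 True False \<union> stratum M S1 S0 True True"
  by (auto simp: stratum_def)

lemma control_strata: "{\<omega> \<in> space M. S0 \<omega> = False} = stratum M S1 S0 True False \<union> stratum M S1 S0 False False"
  by (auto simp: stratum_def)

lemma cexp_ev_treated_score_weighted:
  assumes eps1: "AE \<omega> in M. \<epsilon>1 = condE M N X Y1 (stratum M S1 S0 True False) \<omega>
                                / condE M N X Y1 (stratum M S1 S0 True True) \<omega>"
    and int_Y1: "integrable M Y1"
    and int_w1sn: "integrable M (\<lambda>\<omega>. w1_ssbar M N X S1 S0 \<epsilon>1 \<omega> * obsY Z Y1 Y0 \<omega>)"
    and int_w1ss: "integrable M (\<lambda>\<omega>. w1_ss M N X S1 S0 \<epsilon>1 \<omega> * obsY Z Y1 Y0 \<omega>)"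
    and nz_esn: "AE \<omega> in M. escore M N X S1 S0 True False \<omega> \<noteq> 0"
    and nz_den1: "AE \<omega> in M. condE M N X Y1 (stratum M S1 S0 True True) \<omega> \<noteq> 0"
    and nz_wden1: "AE \<omega> in M. \<epsilon>1 * escore M N X S1 S0 True False \<omega> + escore M N X S1 S0 True True \<omega> \<noteq> 0"
    and pos_pi: "sprop M S1 S0 True True > 0" "sprop M S1 S0 True False > 0"
    and pos_E11: "prob {\<omega> \<in> space M. Z \<omega> \<and> obsS Z S1 S0 \<omega>} > 0"
  shows "cexp_ev M (\<lambda>\<omega>. w1_ssbar M N X S1 S0 \<epsilon>1 \<omega> * obsY Z Y1 Y0 \<omega>)
           {\<omega> \<in> space M. Z \<omega> \<and> obsS Z S1 S0 \<omega>} = cexp_ev M Y1 (stratum M S1 S0 True False)"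
    and "cexp_ev M (\<lambda>\<omega>. w1_ss M N X S1 S0 \<epsilon>1 \<omega> * obsY Z Y1 Y0 \<omega>)
           {\<omega> \<in> space M. Z \<omega> \<and> obsS Z S1 S0 \<omega>} = cexp_ev M Y1 (stratum M S1 S0 True True)"
proof -
  have pos: "prob {\<omega> \<in> space M. Z \<omega> \<and> obsS Z S1 S0 \<omega> = True} > 0" using pos_E11 by simp
  have "w1_ssbar M N X S1 S0 \<epsilon>1 \<in> borel_measurable potential_algebra"
    "w1_ss M N X S1 S0 \<epsilon>1 \<in> borel_measurable potential_algebra"
    unfolding w1_ssbar_def w1_ss_def by measurable
  note sn = cexp_ev_observed_treated[OF this(1) int_w1sn pos, unfolded treated_strata]
    and ss = cexp_ev_observed_treated[OF this(2) int_w1ss pos, unfolded treated_strata]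
  note weighted = covariates.cexp_ev_principal_score_weighted[OF int_Y1 stratum_events stratum_events strata_disjoint pos_pi(2,1)[unfolded sprop_def]
      eps1[unfolded condE_def pscore_def] nz_esn[unfolded escore_def pscore_def]
      nz_den1[unfolded condE_def pscore_def] nz_wden1[unfolded escore_def pscore_def]
      sn(1)[unfolded w1_ssbar_def escore_def pscore_def sprop_def]
      ss(1)[unfolded w1_ss_def escore_def pscore_def sprop_def]]
  show "cexp_ev M (\<lambda>\<omega>. w1_ssbar M N X S1 S0 \<epsilon>1 \<omega> * obsY Z Y1 Y0 \<omega>)
           {\<omega> \<in> space M. Z \<omega> \<and> obsS Z S1 S0 \<omega>} = cexp_ev M Y1 (stratum M S1 S0 True False)"
    using sn(2) weighted(1) by (simp add: w1_ssbar_def escore_def pscore_def sprop_def)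
  show "cexp_ev M (\<lambda>\<omega>. w1_ss M N X S1 S0 \<epsilon>1 \<omega> * obsY Z Y1 Y0 \<omega>)
           {\<omega> \<in> space M. Z \<omega> \<and> obsS Z S1 S0 \<omega>} = cexp_ev M Y1 (stratum M S1 S0 True True)"
    using ss(2) weighted(2) by (simp add: w1_ss_def escore_def pscore_def sprop_def)
qed

lemma cexp_ev_control_score_weighted:
  assumes eps0: "AE \<omega> in M. \<epsilon>0 = condE M N X Y0 (stratum M S1 S0 True False) \<omega>
                                / condE M N X Y0 (stratum M S1 S0 False False) \<omega>"
    and int_Y0: "integrable M Y0"
    and int_w0sn: "integrable M (\<lambda>\<omega>. w0_ssbar M N X S1 S0 \<epsilon>0 \<omega> * obsY Z Y1 Y0 \<omega>)"
    and int_w0nn: "integrable M (\<lambda>\<omega>. w0_sbarsbar M N X S1 S0 \<epsilon>0 \<omega> * obsY Z Y1 Y0 \<omega>)"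
    and nz_esn: "AE \<omega> in M. escore M N X S1 S0 True False \<omega> \<noteq> 0"
    and nz_den0: "AE \<omega> in M. condE M N X Y0 (stratum M S1 S0 False False) \<omega> \<noteq> 0"
    and nz_wden0: "AE \<omega> in M. \<epsilon>0 * escore M N X S1 S0 True False \<omega> + escore M N X S1 S0 False False \<omega> \<noteq> 0"
    and pos_pi: "sprop M S1 S0 False False > 0" "sprop M S1 S0 True False > 0"
    and pos_E00: "prob {\<omega> \<in> space M. \<not> Z \<omega> \<and> \<not> obsS Z S1 S0 \<omega>} > 0"
  shows "cexp_ev M (\<lambda>\<omega>. w0_ssbar M N X S1 S0 \<epsilon>0 \<omega> * obsY Z Y1 Y0 \<omega>)
           {\<omega> \<in> space M. \<not> Z \<omega> \<and> \<not> obsS Z S1 S0 \<omega>} = cexp_ev M Y0 (stratum M S1 S0 True False)"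
    and "cexp_ev M (\<lambda>\<omega>. w0_sbarsbar M N X S1 S0 \<epsilon>0 \<omega> * obsY Z Y1 Y0 \<omega>)
           {\<omega> \<in> space M. \<not> Z \<omega> \<and> \<not> obsS Z S1 S0 \<omega>} = cexp_ev M Y0 (stratum M S1 S0 False False)"
proof -
  have pos: "prob {\<omega> \<in> space M. \<not> Z \<omega> \<and> obsS Z S1 S0 \<omega> = False} > 0" using pos_E00 by simp
  have "w0_ssbar M N X S1 S0 \<epsilon>0 \<in> borel_measurable potential_algebra"
    "w0_sbarsbar M N X S1 S0 \<epsilon>0 \<in> borel_measurable potential_algebra"
    unfolding w0_ssbar_def w0_sbarsbar_def by measurable
  note sn = cexp_ev_observed_control[OF this(1) int_w0sn pos, unfolded control_strata]
    and nn = cexp_ev_observed_control[OF this(2) int_w0nn pos, unfolded control_strata]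
  note weighted = covariates.cexp_ev_principal_score_weighted[OF int_Y0 stratum_events stratum_events strata_disjoint pos_pi(2,1)[unfolded sprop_def]
      eps0[unfolded condE_def pscore_def] nz_esn[unfolded escore_def pscore_def]
      nz_den0[unfolded condE_def pscore_def] nz_wden0[unfolded escore_def pscore_def]
      sn(1)[unfolded w0_ssbar_def escore_def pscore_def sprop_def]
      nn(1)[unfolded w0_sbarsbar_def escore_def pscore_def sprop_def]]
  show "cexp_ev M (\<lambda>\<omega>. w0_ssbar M N X S1 S0 \<epsilon>0 \<omega> * obsY Z Y1 Y0 \<omega>)
           {\<omega> \<in> space M. \<not> Z \<omega> \<and> \<not> obsS Z S1 S0 \<omega>} = cexp_ev M Y0 (stratum M S1 S0 True False)"
    using sn(2) weighted(1) by (simp add: w0_ssbar_def escore_def pscore_def sprop_def)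
  show "cexp_ev M (\<lambda>\<omega>. w0_sbarsbar M N X S1 S0 \<epsilon>0 \<omega> * obsY Z Y1 Y0 \<omega>)
           {\<omega> \<in> space M. \<not> Z \<omega> \<and> \<not> obsS Z S1 S0 \<omega>} = cexp_ev M Y0 (stratum M S1 S0 False False)"
    using nn(2) weighted(2) by (simp add: w0_sbarsbar_def escore_def pscore_def sprop_def)
qed

lemma integrable_obsY:
  assumes "integrable M Y1" "integrable M Y0"
  shows "integrable M (obsY Z Y1 Y0)"
proof (rule Bochner_Integration.integrable_bound)
  show "integrable M (\<lambda>\<omega>. \<bar>Y1 \<omega>\<bar> + \<bar>Y0 \<omega>\<bar>)" using assms by simp
  show "AE \<omega> in M. norm (obsY Z Y1 Y0 \<omega>) \<le> norm (\<bar>Y1 \<omega>\<bar> + \<bar>Y0 \<omega>\<bar>)"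
    by (simp add: obsY_def)
  show "obsY Z Y1 Y0 \<in> borel_measurable M"
    unfolding obsY_def by measurable
qed

lemma cexp_ev_treated_never_selected:
  assumes monotonicity: "AE \<omega> in M. S0 \<omega> \<longrightarrow> S1 \<omega>"
    and int_Y: "integrable M Y1" "integrable M Y0"
    and pos_E10: "prob {\<omega> \<in> space M. Z \<omega> \<and> \<not> obsS Z S1 S0 \<omega>} > 0"
  shows "cexp_ev M (obsY Z Y1 Y0) {\<omega> \<in> space M. Z \<omega> \<and> \<not> obsS Z S1 S0 \<omega>}
           = cexp_ev M Y1 (stratum M S1 S0 False False)"
proof -
  have "cexp_ev M (obsY Z Y1 Y0) {\<omega> \<in> space M. Z \<omega> \<and> \<not> obsS Z S1 S0 \<omega>}
      = cexp_ev M Y1 {\<omega> \<in> space M. S1 \<omega> = False}"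
    using cexp_ev_observed_treated(2)[of "\<lambda>_. 1" False] integrable_obsY[OF int_Y] pos_E10 by simp
  also have "\<dots> = cexp_ev M Y1 (stratum M S1 S0 False False)"
    using monotonicity by (intro cexp_ev_cong_AE_set) (auto simp: stratum_def elim!: AE_mp)
  finally show ?thesis .
qed

lemma cexp_ev_control_always_selected:
  assumes monotonicity: "AE \<omega> in M. S0 \<omega> \<longrightarrow> S1 \<omega>"
    and int_Y: "integrable M Y1" "integrable M Y0"
    and pos_E01: "prob {\<omega> \<in> space M. \<not> Z \<omega> \<and> obsS Z S1 S0 \<omega>} > 0"
  shows "cexp_ev M (obsY Z Y1 Y0) {\<omega> \<in> space M. \<not> Z \<omega> \<and> obsS Z S1 S0 \<omega>}
           = cexp_ev M Y0 (stratum M S1 S0 True True)"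
proof -
  have "cexp_ev M (obsY Z Y1 Y0) {\<omega> \<in> space M. \<not> Z \<omega> \<and> obsS Z S1 S0 \<omega>}
      = cexp_ev M Y0 {\<omega> \<in> space M. S0 \<omega> = True}"
    using cexp_ev_observed_control(2)[of "\<lambda>_. 1" True] integrable_obsY[OF int_Y] pos_E01 by simp
  also have "\<dots> = cexp_ev M Y0 (stratum M S1 S0 True True)"
    using monotonicity by (intro cexp_ev_cong_AE_set) (auto simp: stratum_def elim!: AE_mp)
  finally show ?thesis .
qed

end

theorem proposition4:
  fixes M :: "'a measure" and N :: "'x measure"
    and Z S1 S0 :: "'a \<Rightarrow> bool" and Y1 Y0 :: "'a \<Rightarrow> real" and X :: "'a \<Rightarrow> 'x"
    and \<epsilon>1 \<epsilon>0 :: real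
  assumes P: "prob_space M"
    and mZ: "Z \<in> M \<rightarrow>\<^sub>M count_space UNIV"
    and mS1: "S1 \<in> M \<rightarrow>\<^sub>M count_space UNIV"
    and mS0: "S0 \<in> M \<rightarrow>\<^sub>M count_space UNIV"
    and mY1: "Y1 \<in> borel_measurable M"
    and mY0: "Y0 \<in> borel_measurable M"
    and mX: "X \<in> M \<rightarrow>\<^sub>M N"
    and randomization: "prob_space.indep_set M
           {Z -` A \<inter> space M | A. A \<in> sets (count_space UNIV)}
           {(\<lambda>\<omega>. (S1 \<omega>, S0 \<omega>, Y1 \<omega>, Y0 \<omega>, X \<omega>)) -` B \<inter> space M | B.
              B \<in> sets (count_space UNIV \<Otimes>\<^sub>M count_space UNIV \<Otimes>\<^sub>M borel \<Otimes>\<^sub>M borel \<Otimes>\<^sub>M N)}"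
    and monotonicity: "AE \<omega> in M. S0 \<omega> \<longrightarrow> S1 \<omega>"
    and eps1: "AE \<omega> in M. \<epsilon>1 = condE M N X Y1 (stratum M S1 S0 True False) \<omega>
                                / condE M N X Y1 (stratum M S1 S0 True True) \<omega>"
    and eps0: "AE \<omega> in M. \<epsilon>0 = condE M N X Y0 (stratum M S1 S0 True False) \<omega>
                                / condE M N X Y0 (stratum M S1 S0 False False) \<omega>"
    and int_Y1: "integrable M Y1"
    and int_Y0: "integrable M Y0"
    and int_w1sn: "integrable M (\<lambda>\<omega>. w1_ssbar M N X S1 S0 \<epsilon>1 \<omega> * obsY Z Y1 Y0 \<omega>)"
    and int_w0sn: "integrable M (\<lambda>\<omega>. w0_ssbar M N X S1 S0 \<epsilon>0 \<omega> * obsY Z Y1 Y0 \<omega>)"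
    and int_w0nn: "integrable M (\<lambda>\<omega>. w0_sbarsbar M N X S1 S0 \<epsilon>0 \<omega> * obsY Z Y1 Y0 \<omega>)"
    and int_w1ss: "integrable M (\<lambda>\<omega>. w1_ss M N X S1 S0 \<epsilon>1 \<omega> * obsY Z Y1 Y0 \<omega>)"
    and pos_ess: "AE \<omega> in M. escore M N X S1 S0 True True \<omega> > 0"
    and pos_esn: "AE \<omega> in M. escore M N X S1 S0 True False \<omega> > 0"
    and pos_enn: "AE \<omega> in M. escore M N X S1 S0 False False \<omega> > 0"
    and nz_den1: "AE \<omega> in M. condE M N X Y1 (stratum M S1 S0 True True) \<omega> \<noteq> 0"
    and nz_den0: "AE \<omega> in M. condE M N X Y0 (stratum M S1 S0 False False) \<omega> \<noteq> 0"
    and pos_wden1: "AE \<omega> in M. \<epsilon>1 * escore M N X S1 S0 True False \<omega> + escore M N X S1 S0 True True \<omega> > 0"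
    and pos_wden0: "AE \<omega> in M. \<epsilon>0 * escore M N X S1 S0 True False \<omega> + escore M N X S1 S0 False False \<omega> > 0"
    and pos_pi: "sprop M S1 S0 True True > 0" "sprop M S1 S0 True False > 0" "sprop M S1 S0 False False > 0"
    and pos_E11: "measure M {\<omega> \<in> space M. Z \<omega> \<and> obsS Z S1 S0 \<omega>} > 0"
    and pos_E10: "measure M {\<omega> \<in> space M. Z \<omega> \<and> \<not> obsS Z S1 S0 \<omega>} > 0"
    and pos_E01: "measure M {\<omega> \<in> space M. \<not> Z \<omega> \<and> obsS Z S1 S0 \<omega>} > 0"
    and pos_E00: "measure M {\<omega> \<in> space M. \<not> Z \<omega> \<and> \<not> obsS Z S1 S0 \<omega>} > 0"
  shows "(cexp_ev M (\<lambda>\<omega>. Y1 \<omega> - Y0 \<omega>) (stratum M S1 S0 True False) =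
           cexp_ev M (\<lambda>\<omega>. w1_ssbar M N X S1 S0 \<epsilon>1 \<omega> * obsY Z Y1 Y0 \<omega>)
                     {\<omega> \<in> space M. Z \<omega> \<and> obsS Z S1 S0 \<omega>}
         - cexp_ev M (\<lambda>\<omega>. w0_ssbar M N X S1 S0 \<epsilon>0 \<omega> * obsY Z Y1 Y0 \<omega>)
                     {\<omega> \<in> space M. \<not> Z \<omega> \<and> \<not> obsS Z S1 S0 \<omega>}) \<and>
         (cexp_ev M (\<lambda>\<omega>. Y1 \<omega> - Y0 \<omega>) (stratum M S1 S0 False False) =
           cexp_ev M (obsY Z Y1 Y0) {\<omega> \<in> space M. Z \<omega> \<and> \<not> obsS Z S1 S0 \<omega>}
         - cexp_ev M (\<lambda>\<omega>. w0_sbarsbar M N X S1 S0 \<epsilon>0 \<omega> * obsY Z Y1 Y0 \<omega>)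
                     {\<omega> \<in> space M. \<not> Z \<omega> \<and> \<not> obsS Z S1 S0 \<omega>}) \<and>
         (cexp_ev M (\<lambda>\<omega>. Y1 \<omega> - Y0 \<omega>) (stratum M S1 S0 True True) =
           cexp_ev M (\<lambda>\<omega>. w1_ss M N X S1 S0 \<epsilon>1 \<omega> * obsY Z Y1 Y0 \<omega>)
                     {\<omega> \<in> space M. Z \<omega> \<and> obsS Z S1 S0 \<omega>}
         - cexp_ev M (obsY Z Y1 Y0) {\<omega> \<in> space M. \<not> Z \<omega> \<and> obsS Z S1 S0 \<omega>})"
proof -
  interpret randomized_experiment M N Z S1 S0 Y1 Y0 X
    using P mZ mS1 mS0 mY1 mY0 mX randomization
    by (simp add: randomized_experiment_def randomized_experiment_axioms_def)
  have ACE: "cexp_ev M (\<lambda>\<omega>. Y1 \<omega> - Y0 \<omega>) (stratum M S1 S0 a b)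
      = cexp_ev M Y1 (stratum M S1 S0 a b) - cexp_ev M Y0 (stratum M S1 S0 a b)" for a b
    by (intro cexp_ev_diff integrable_real_mult_indicator stratum_events int_Y1 int_Y0)
  have nz_esn: "AE \<omega> in M. escore M N X S1 S0 True False \<omega> \<noteq> 0"
    using pos_esn by eventually_elim simp
  have nz_wden: "AE \<omega> in M. \<epsilon>1 * escore M N X S1 S0 True False \<omega> + escore M N X S1 S0 True True \<omega> \<noteq> 0"
    "AE \<omega> in M. \<epsilon>0 * escore M N X S1 S0 True False \<omega> + escore M N X S1 S0 False False \<omega> \<noteq> 0"
    using pos_wden1 pos_wden0 by (auto elim!: AE_mp)
  note treated = cexp_ev_treated_score_weighted[OF eps1 int_Y1 int_w1sn int_w1ss nz_esn nz_den1
      nz_wden(1) pos_pi(1,2) pos_E11]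
  note control = cexp_ev_control_score_weighted[OF eps0 int_Y0 int_w0sn int_w0nn nz_esn nz_den0
      nz_wden(2) pos_pi(3,2) pos_E00]
  show ?thesis
    unfolding ACE treated control
      cexp_ev_treated_never_selected[OF monotonicity int_Y1 int_Y0 pos_E10]
      cexp_ev_control_always_selected[OF monotonicity int_Y1 int_Y0 pos_E01]
    by simp
qed

end
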